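(* Let $G:=F_0*X_0*X_1$ be a free product of groups and let $h$ be an automorphism of $G$ which fixes $F_0$ pointwise, leaves $X_0*X_1$ invariant, and acts on $X_0*X_1$ as an automorphism of prime order $p$ whose fixed point set is exactly $X_0$. Suppose that $h$ fixes the conjugacy class of an element $a\in G\setminus\big((F_0*X_0)\cup(X_0*X_1)\big)$ which is cyclically reduced of the form $a=a_1x_1a_2x_2\cdots a_mx_m$ with $a_i\in F_0\setminus\{1\}$ and $x_i\in (X_0*X_1)\setminus\{1\}$ for $i=1,\dots,m$. Then there is a permutation $\sigma$ in the subgroup $\langle(1\,2\,\cdots\,m)\rangle$ of $Sym(\{1,\dots,m\})$ such that (i) $a_i=a_{\sigma(i)}$ and $h(x_i)=x_{\sigma(i)}$ for all $i$, and (ii) $p$ divides the order of $\sigma$.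
   Context: "$h$ fixes the conjugacy class of $a$" means $h(a)$ is conjugate to $a$ in $G$. Cyclically reduced refers to the free product decomposition $G=F_0*(X_0*X_1)$. *)

theory Defs
  imports "HOL-Algebra.Algebra"
begin

definition alt_word :: "('a, 'b) monoid_scheme \<Rightarrow> 'a set \<Rightarrow> 'a set \<Rightarrow> (bool \<times> 'a) list \<Rightarrow> bool" where
  "alt_word G A B w \<longleftrightarrow>
     (\<forall>fx \<in> set w. snd fx \<in> (if fst fx then A else B) - {\<one>\<^bsub>G\<^esub>}) \<and>
     (\<forall>i. Suc i < length w \<longrightarrow> fst (w ! i) \<noteq> fst (w ! Suc i))"

definition word_val :: "('a, 'b) monoid_scheme \<Rightarrow> (bool \<times> 'a) list \<Rightarrow> 'a" where
  "word_val G w = foldr (\<lambda>fx r. snd fx \<otimes>\<^bsub>G\<^esub> r) w \<one>\<^bsub>G\<^esub>"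

definition is_free_product :: "('a, 'b) monoid_scheme \<Rightarrow> 'a set \<Rightarrow> 'a set \<Rightarrow> bool" where
  "is_free_product G A B \<longleftrightarrow> group G \<and> subgroup A G \<and> subgroup B G \<and>
     generate G (A \<union> B) = carrier G \<and>
     (\<forall>w. w \<noteq> [] \<and> alt_word G A B w \<longrightarrow> word_val G w \<noteq> \<one>\<^bsub>G\<^esub>)"

definition alt_prod :: "('a, 'b) monoid_scheme \<Rightarrow> (nat \<Rightarrow> 'a) \<Rightarrow> (nat \<Rightarrow> 'a) \<Rightarrow> nat \<Rightarrow> 'a" where
  "alt_prod G as xs m = foldr (\<lambda>i r. as i \<otimes>\<^bsub>G\<^esub> xs i \<otimes>\<^bsub>G\<^esub> r) [1..<Suc m] \<one>\<^bsub>G\<^esub>"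

definition cyc :: "nat \<Rightarrow> nat \<Rightarrow> nat" where
  "cyc m i = (if 1 \<le> i \<and> i \<le> m then i mod m + 1 else i)"

definition perm_order :: "(nat \<Rightarrow> nat) \<Rightarrow> nat" where
  "perm_order \<sigma> = (LEAST n. 0 < n \<and> \<sigma> ^^ n = id)"

end

theory Submission
  imports Defs
begin

text \<open>Both a and h(a) are represented by reduced words of length 2m alternating between F0 and H,
  and they are conjugate. In a free product, conjugate cyclically reduced words are rotations of each
  other; as both words begin in F0, the rotation is by an even amount 2t, i.e. by the power
  \<sigma> = (1 2 ... m)^t, which gives a_i = a_\<sigma>(i) and h(x_i) = x_\<sigma>(i). Hence h^d fixes every x_i,
  where d is the order of \<sigma>, while h^p fixes H. If p did not divide d, then h itself would fix every
  x_i (as gcd(p, d) = 1), putting all x_i into X0 and a into F0 * X0.\<close>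

lemma (in group) inv_mult_cancel_left: "x \<in> carrier G \<Longrightarrow> y \<in> carrier G \<Longrightarrow> inv x \<otimes> (x \<otimes> y) = y"
  by (simp add: m_assoc[symmetric])

lemma (in group) mult_inv_cancel_left: "x \<in> carrier G \<Longrightarrow> y \<in> carrier G \<Longrightarrow> x \<otimes> (inv x \<otimes> y) = y"
  by (simp add: m_assoc[symmetric])

lemma hd_rotate_length_minus_one: "u \<noteq> [] \<Longrightarrow> hd (rotate (length u - 1) u) = last u"
  by (simp add: hd_rotate_conv_nth last_conv_nth)

lemma rotate1_rotate_length_minus_one: "rotate1 (rotate (length u - 1) u) = u"
  by (cases u) (simp_all flip: rotate_Suc)

lemma word_val_Nil [simp]: "word_val G [] = \<one>\<^bsub>G\<^esub>"
  by (simp add: word_val_def)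

lemma word_val_Cons [simp]: "word_val G ((f, x) # w) = x \<otimes>\<^bsub>G\<^esub> word_val G w"
  by (simp add: word_val_def)

context monoid
begin

lemma word_val_closed: "snd ` set w \<subseteq> carrier G \<Longrightarrow> word_val G w \<in> carrier G"
  by (induction w) auto

lemma word_val_append:
  "snd ` set u \<subseteq> carrier G \<Longrightarrow> snd ` set v \<subseteq> carrier G
    \<Longrightarrow> word_val G (u @ v) = word_val G u \<otimes> word_val G v"
  by (induction u) (auto simp: word_val_closed m_assoc)

end

fun mult_letter :: "('a, 'b) monoid_scheme \<Rightarrow> bool \<Rightarrow> 'a \<Rightarrow> (bool \<times> 'a) list \<Rightarrow> (bool \<times> 'a) list" where
  "mult_letter G f y [] = (if y = \<one>\<^bsub>G\<^esub> then [] else [(f, y)])"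
| "mult_letter G f y ((f', x) # w) =
     (if y = \<one>\<^bsub>G\<^esub> then (f', x) # w
      else if f \<noteq> f' then (f, y) # (f', x) # w
      else if y \<otimes>\<^bsub>G\<^esub> x = \<one>\<^bsub>G\<^esub> then w
      else (f, y \<otimes>\<^bsub>G\<^esub> x) # w)"

definition inv_word :: "('a, 'b) monoid_scheme \<Rightarrow> (bool \<times> 'a) list \<Rightarrow> (bool \<times> 'a) list" where
  "inv_word G w = rev (map (apsnd (\<lambda>x. inv\<^bsub>G\<^esub> x)) w)"

locale free_product =
  fixes G :: "('a, 'b) monoid_scheme" (structure) and A B :: "'a set"
  assumes is_free_product: "is_free_product G A B"
begin

sublocale group G
  using is_free_product by (simp add: is_free_product_def)

abbreviation factor :: "bool \<Rightarrow> 'a set" where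
  "factor f \<equiv> if f then A else B"

abbreviation reduced :: "(bool \<times> 'a) list \<Rightarrow> bool" where
  "reduced \<equiv> alt_word G A B"

lemma subgroup_factor: "subgroup (factor f) G"
  using is_free_product by (cases f) (simp_all add: is_free_product_def)

lemma factor_carrier: "x \<in> factor f \<Longrightarrow> x \<in> carrier G"
  by (rule subgroup.mem_carrier[OF subgroup_factor])

lemma factor_mult: "x \<in> factor f \<Longrightarrow> y \<in> factor f \<Longrightarrow> x \<otimes> y \<in> factor f"
  by (rule subgroup.m_closed[OF subgroup_factor])

lemma factor_inv: "x \<in> factor f \<Longrightarrow> inv x \<in> factor f"
  by (rule subgroup.m_inv_closed[OF subgroup_factor])

lemma reduced_Nil [simp]: "reduced []"
  by (simp add: alt_word_def)

lemma reduced_Cons: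
  "reduced ((f, x) # w) \<longleftrightarrow> x \<in> factor f - {\<one>} \<and> reduced w \<and> (w \<noteq> [] \<longrightarrow> fst (hd w) \<noteq> f)"
  (is "?lhs \<longleftrightarrow> ?rhs")
proof
  assume ?lhs
  then have "\<forall>i. Suc i < length w \<longrightarrow> fst (w ! i) \<noteq> fst (w ! Suc i)"
    unfolding alt_word_def by (metis Suc_less_eq length_Cons nth_Cons_Suc)
  with \<open>?lhs\<close> show ?rhs
    by (cases w) (auto simp: alt_word_def dest!: spec[of _ 0])
next
  assume ?rhs
  then show ?lhs
    unfolding alt_word_def by (auto simp: nth_Cons hd_conv_nth split: nat.splits)
qed

lemma reduced_append:
  "reduced (u @ v) \<longleftrightarrow> reduced u \<and> reduced v \<and> (u \<noteq> [] \<and> v \<noteq> [] \<longrightarrow> fst (last u) \<noteq> fst (hd v))"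
proof (induction u)
  case (Cons l u)
  obtain f x where l: "l = (f, x)"
    by fastforce
  show ?case
    unfolding l append_Cons reduced_Cons Cons.IH by (cases u) auto
qed simp

lemma reduced_letters_carrier: "reduced w \<Longrightarrow> snd ` set w \<subseteq> carrier G"
proof
  fix x assume "reduced w" "x \<in> snd ` set w"
  then obtain f where "x \<in> factor f"
    unfolding alt_word_def by fastforce
  then show "x \<in> carrier G"
    by (rule factor_carrier)
qed

lemma reduced_val_closed: "reduced w \<Longrightarrow> word_val G w \<in> carrier G"
  by (simp add: reduced_letters_carrier word_val_closed)

lemma reduced_val_append:
  "reduced u \<Longrightarrow> reduced v \<Longrightarrow> word_val G (u @ v) = word_val G u \<otimes> word_val G v"
  by (simp add: reduced_letters_carrier word_val_append)

lemma reduced_val_ne_one: "reduced w \<Longrightarrow> w \<noteq> [] \<Longrightarrow> word_val G w \<noteq> \<one>"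
  using is_free_product by (simp add: is_free_product_def)

lemma reduced_mult_letter:
  assumes y: "y \<in> factor f" and w: "reduced w"
  shows "reduced (mult_letter G f y w) \<and> word_val G (mult_letter G f y w) = y \<otimes> word_val G w"
proof (cases w)
  case Nil
  then show ?thesis
    using y by (auto simp: reduced_Cons factor_carrier)
next
  case (Cons l w')
  obtain f' x where l: "l = (f', x)"
    by fastforce
  have x: "x \<in> factor f' - {\<one>}" and w': "reduced w'" "w' \<noteq> [] \<longrightarrow> fst (hd w') \<noteq> f'"
    using w unfolding Cons l reduced_Cons by auto
  have carr: "y \<in> carrier G" "x \<in> carrier G" "word_val G w' \<in> carrier G"
    using y x w' by (auto intro: factor_carrier reduced_val_closed)
  consider "y = \<one>" | "y \<noteq> \<one>" "f \<noteq> f'" | "y \<noteq> \<one>" "f = f'" "y \<otimes> x = \<one>"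
    | "y \<noteq> \<one>" "f = f'" "y \<otimes> x \<noteq> \<one>"
    by blast
  then show ?thesis
  proof cases
    case 1
    then show ?thesis
      using w carr unfolding Cons l by simp
  next
    case 2
    then show ?thesis
      using w y unfolding Cons l by (simp add: reduced_Cons)
  next
    case 3
    then show ?thesis
      using w' carr unfolding Cons l by (simp add: m_assoc[symmetric])
  next
    case 4
    then have "y \<otimes> x \<in> factor f"
      using factor_mult y x by simp
    with 4 show ?thesis
      using w' carr unfolding Cons l by (simp add: reduced_Cons m_assoc)
  qed
qed

lemma mult_letter_inv_left:
  assumes y: "y \<in> factor f" and u: "reduced u"
  shows "mult_letter G f y (mult_letter G f (inv y) u) = u"
proof (cases u)
  case Nil
  then show ?thesis
    using factor_carrier[OF y] by auto
next
  case (Cons l w)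
  obtain g x where l: "l = (g, x)"
    by fastforce
  have x: "x \<in> factor g - {\<one>}" and w: "w \<noteq> [] \<longrightarrow> fst (hd w) \<noteq> g"
    using u unfolding Cons l reduced_Cons by auto
  have carr: "y \<in> carrier G" "x \<in> carrier G"
    using y x by (auto intro: factor_carrier)
  then have cancel: "y \<otimes> (inv y \<otimes> x) = x"
    by (rule mult_inv_cancel_left)
  have "inv y \<otimes> x = \<one> \<Longrightarrow> x = y"
    using cancel carr by (metis r_one)
  moreover have "mult_letter G f y w = (f, y) # w" if "f = g" "y \<noteq> \<one>"
    using that w by (cases w) auto
  ultimately show ?thesis
    using carr cancel x unfolding Cons l by auto
qed

lemma reduced_unique: "reduced u \<Longrightarrow> reduced v \<Longrightarrow> word_val G u = word_val G v \<Longrightarrow> u = v"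
proof (induction v arbitrary: u)
  case Nil
  then show ?case
    using reduced_val_ne_one by fastforce
next
  case (Cons l v')
  obtain f y where l: "l = (f, y)"
    by fastforce
  have y: "y \<in> factor f" "y \<noteq> \<one>" and v': "reduced v'"
    using Cons.prems(2) unfolding l reduced_Cons by auto
  note mult_inv = reduced_mult_letter[OF factor_inv[OF y(1)] Cons.prems(1)]
  have carr: "y \<in> carrier G" "word_val G v' \<in> carrier G"
    using y v' by (auto intro: factor_carrier reduced_val_closed)
  have "word_val G (mult_letter G f (inv y) u) = word_val G v'"
    using mult_inv carr Cons.prems(3) unfolding l by (simp add: m_assoc[symmetric])
  then have "mult_letter G f (inv y) u = v'"
    using Cons.IH[of "mult_letter G f (inv y) u"] mult_inv v' by blast
  then have "u = mult_letter G f y v'"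
    using mult_letter_inv_left[of y f u] y Cons.prems(1) by simp
  moreover have "mult_letter G f (inv y) (l # v') = v'"
    using y carr unfolding l by simp
  then have "l # v' = mult_letter G f y v'"
    using mult_letter_inv_left[of y f "l # v'"] y Cons.prems(2) by simp
  ultimately show ?case
    by simp
qed

lemma reduced_exists_mult:
  "reduced u \<Longrightarrow> reduced v \<Longrightarrow> \<exists>w. reduced w \<and> word_val G w = word_val G u \<otimes> word_val G v"
proof (induction u)
  case Nil
  then show ?case
    using reduced_val_closed by auto
next
  case (Cons l u)
  obtain f x where l: "l = (f, x)"
    by fastforce
  have x: "x \<in> factor f" and u: "reduced u"
    using Cons.prems(1) unfolding l reduced_Cons by auto
  then obtain w where w: "reduced w" "word_val G w = word_val G u \<otimes> word_val G v"
    using Cons by blast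
  have "word_val G (mult_letter G f x w) = word_val G (l # u) \<otimes> word_val G v"
    using reduced_mult_letter[OF x w(1)] factor_carrier[OF x] u Cons.prems(2) w(2) unfolding l
    by (simp add: reduced_val_closed m_assoc)
  then show ?case
    using reduced_mult_letter[OF x w(1)] by blast
qed

lemma reduced_exists:
  assumes "g \<in> carrier G"
  shows "\<exists>w. reduced w \<and> word_val G w = g"
proof -
  have "g \<in> generate G (A \<union> B)"
    using assms is_free_product by (simp add: is_free_product_def)
  then show ?thesis
  proof (induction rule: generate.induct)
    case one
    show ?case
      by (auto intro: exI[of _ "[]"])
  next
    case (incl x)
    then have "x \<in> factor (x \<in> A)"
      by auto
    then show ?case
      using reduced_mult_letter[of x "x \<in> A" "[]"] factor_carrier by fastforce
  next
    case (inv x)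
    then have "x \<in> factor (x \<in> A)"
      by auto
    then have "inv x \<in> factor (x \<in> A)"
      by (rule factor_inv)
    then show ?case
      using reduced_mult_letter[of "inv x" "x \<in> A" "[]"] factor_carrier by fastforce
  next
    case (eng x y)
    then show ?case
      using reduced_exists_mult by blast
  qed
qed

lemma reduced_inv_word:
  "reduced w \<Longrightarrow> reduced (inv_word G w) \<and> word_val G (inv_word G w) = inv (word_val G w)"
proof (induction w)
  case (Cons l w)
  obtain f x where l: "l = (f, x)"
    by fastforce
  have x: "x \<in> factor f - {\<one>}" and w: "reduced w" "w \<noteq> [] \<longrightarrow> fst (hd w) \<noteq> f"
    using Cons.prems unfolding l reduced_Cons by auto
  have carr: "x \<in> carrier G" "word_val G w \<in> carrier G"
    using x w by (auto intro: factor_carrier reduced_val_closed)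
  have inv_x: "reduced [(f, inv x)]"
    using x carr factor_inv by (simp add: reduced_Cons)
  have "inv_word G (l # w) = inv_word G w @ [(f, inv x)]"
    unfolding l inv_word_def by simp
  moreover have "reduced (inv_word G w @ [(f, inv x)])"
    using Cons.IH w inv_x by (auto simp: reduced_append inv_word_def last_rev hd_map)
  ultimately show ?case
    using Cons.IH w inv_x carr unfolding l by (simp add: reduced_val_append inv_mult_group)
qed (simp add: inv_word_def)

lemma reduced_nth_fst: "reduced w \<Longrightarrow> i < length w \<Longrightarrow> fst (w ! i) \<longleftrightarrow> (fst (hd w) \<longleftrightarrow> even i)"
proof (induction i)
  case 0
  then show ?case
    by (simp add: hd_conv_nth)
next
  case (Suc i)
  then have "fst (w ! i) \<noteq> fst (w ! Suc i)"
    by (simp add: alt_word_def)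
  with Suc show ?case
    by (cases "even i") auto
qed

text \<open>When nonempty, these words begin and end in different factors: they are the cyclically
  reduced words with at least two letters.\<close>

definition even_reduced :: "(bool \<times> 'a) list \<Rightarrow> bool" where
  "even_reduced w \<longleftrightarrow> reduced w \<and> even (length w)"

lemma even_reduced_hd_last:
  assumes "even_reduced u" "u \<noteq> []"
  shows "fst (last u) \<noteq> fst (hd u)"
proof -
  have "odd (length u - 1)"
    using assms by (simp add: even_reduced_def)
  then show ?thesis
    using assms reduced_nth_fst[of u "length u - 1"]
    by (simp add: even_reduced_def last_conv_nth)
qed

lemma even_reduced_Cons_tl:
  assumes "even_reduced (l # u)"
  shows "u \<noteq> []" and "fst (last u) \<noteq> fst l"
proof -
  show "u \<noteq> []"
    using assms by (auto simp: even_reduced_def)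
  then show "fst (last u) \<noteq> fst l"
    using even_reduced_hd_last[OF assms] by simp
qed

lemma even_reduced_rotate1: "even_reduced u \<Longrightarrow> even_reduced (rotate1 u)"
proof (cases u)
  case (Cons l u')
  assume u: "even_reduced u"
  then have "u' \<noteq> []" "fst (last u') \<noteq> fst l"
    using even_reduced_Cons_tl unfolding Cons by blast+
  moreover have "reduced u'" "reduced [l]"
    using u unfolding Cons even_reduced_def by (cases l; simp add: reduced_Cons)+
  ultimately show ?thesis
    using u unfolding Cons even_reduced_def by (simp add: reduced_append)
qed simp

lemma even_reduced_rotate: "even_reduced u \<Longrightarrow> even_reduced (rotate n u)"
  by (induction n) (simp_all add: even_reduced_rotate1)

lemma word_val_rotate1:
  assumes "reduced u" "u \<noteq> []"
  shows "word_val G (rotate1 u) = inv (snd (hd u)) \<otimes> word_val G u \<otimes> snd (hd u)"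
proof -
  obtain l u' where u: "u = l # u'"
    using assms(2) by (cases u) auto
  have carr: "snd l \<in> carrier G" "snd ` set u' \<subseteq> carrier G"
    using reduced_letters_carrier[OF assms(1)] unfolding u by auto
  then have "word_val G (u' @ [l]) = word_val G u' \<otimes> snd l"
    by (cases l) (simp add: word_val_append)
  then show ?thesis
    using carr unfolding u by (cases l) (simp add: word_val_closed m_assoc[symmetric])
qed

lemma inv_word_eq_Nil_iff [simp]: "inv_word G w = [] \<longleftrightarrow> w = []"
  by (simp add: inv_word_def)

lemma last_inv_word: "w \<noteq> [] \<Longrightarrow> last (inv_word G w) = apsnd (\<lambda>x. inv x) (hd w)"
  by (simp add: inv_word_def last_rev hd_map)

lemma conjugate_odd_left:
  assumes u: "even_reduced u" "u \<noteq> []" "hd u = (f, x)" and w: "reduced ((f, c) # w)" and "x \<noteq> c"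
  shows "\<exists>W. reduced W \<and> odd (length W)
           \<and> word_val G W = inv (word_val G ((f, c) # w)) \<otimes> word_val G u \<otimes> word_val G ((f, c) # w)"
proof -
  obtain t where ut: "u = (f, x) # t"
    using u by (cases u) auto
  have x: "x \<in> factor f - {\<one>}" and t: "reduced t" "t \<noteq> []" "fst (hd t) \<noteq> f" "fst (last t) \<noteq> f"
    using u even_reduced_Cons_tl[of "(f, x)" t] unfolding ut even_reduced_def reduced_Cons by auto
  have c: "c \<in> factor f - {\<one>}" and w': "reduced w" "w \<noteq> [] \<longrightarrow> fst (hd w) \<noteq> f"
    using w unfolding reduced_Cons by auto
  have carr: "x \<in> carrier G" "c \<in> carrier G" "word_val G t \<in> carrier G" "word_val G w \<in> carrier G"
    using x c t w' by (auto intro: factor_carrier reduced_val_closed)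
  have "x = c \<otimes> (inv c \<otimes> x)"
    using carr by (simp add: m_assoc[symmetric])
  then have "inv c \<otimes> x \<in> factor f - {\<one>}"
    using x c carr \<open>x \<noteq> c\<close> by (auto simp: factor_inv factor_mult)
  moreover have "reduced (t @ (f, c) # w)"
    using t w by (simp add: reduced_append)
  ultimately have middle: "reduced ((f, inv c \<otimes> x) # t @ (f, c) # w)"
    using t by (simp add: reduced_Cons)
  have inv_w: "reduced (inv_word G w)" "word_val G (inv_word G w) = inv (word_val G w)"
    using reduced_inv_word[OF w'(1)] by auto
  define W where "W = inv_word G w @ (f, inv c \<otimes> x) # t @ (f, c) # w"
  have letters: "snd ` set (inv_word G w) \<subseteq> carrier G" "snd ` set t \<subseteq> carrier G" "snd ` set w \<subseteq> carrier G"
    using inv_w t w' reduced_letters_carrier by blast+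
  have "reduced W"
    using middle inv_w w' unfolding W_def by (auto simp: reduced_append last_inv_word)
  moreover have "odd (length W)"
    using u unfolding W_def ut even_reduced_def by (simp add: inv_word_def)
  moreover have "word_val G W = inv (word_val G w) \<otimes> (inv c \<otimes> x \<otimes> (word_val G t \<otimes> (c \<otimes> word_val G w)))"
    using letters inv_w carr unfolding W_def by (simp add: word_val_append image_Un)
  then have "word_val G W = inv (word_val G ((f, c) # w)) \<otimes> word_val G u \<otimes> word_val G ((f, c) # w)"
    using carr unfolding ut by (simp add: m_assoc inv_mult_group)
  ultimately show ?thesis
    by blast
qed

lemma conjugate_odd_right:
  assumes u: "even_reduced u" "u \<noteq> []" "last u = (f, x)" and w: "reduced ((f, c) # w)" and "x \<noteq> inv c"
  shows "\<exists>W. reduced W \<and> odd (length W)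
           \<and> word_val G W = inv (word_val G ((f, c) # w)) \<otimes> word_val G u \<otimes> word_val G ((f, c) # w)"
proof -
  obtain t where ut: "u = t @ [(f, x)]"
    using u by (metis append_butlast_last_id)
  have t_ne: "t \<noteq> []"
    using u unfolding ut even_reduced_def by auto
  have x: "x \<in> factor f - {\<one>}" and t: "reduced t" "fst (last t) \<noteq> f" "fst (hd t) \<noteq> f"
    using u even_reduced_hd_last[OF u(1,2)] t_ne unfolding ut even_reduced_def
    by (auto simp: reduced_append reduced_Cons)
  have c: "c \<in> factor f - {\<one>}" and w': "reduced w" "w \<noteq> [] \<longrightarrow> fst (hd w) \<noteq> f"
    using w unfolding reduced_Cons by auto
  have carr: "x \<in> carrier G" "c \<in> carrier G" "word_val G t \<in> carrier G" "word_val G w \<in> carrier G"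
    using x c t w' by (auto intro: factor_carrier reduced_val_closed)
  have "x = x \<otimes> c \<otimes> inv c"
    using carr by (simp add: m_assoc)
  then have "x \<otimes> c \<in> factor f - {\<one>}"
    using x c carr \<open>x \<noteq> inv c\<close> by (auto simp: factor_mult)
  then have "reduced ((f, x \<otimes> c) # w)"
    using w' by (simp add: reduced_Cons)
  then have middle: "reduced (t @ (f, x \<otimes> c) # w)"
    using t by (simp add: reduced_append)
  have inv_w: "reduced (inv_word G ((f, c) # w))"
    "word_val G (inv_word G ((f, c) # w)) = inv (c \<otimes> word_val G w)"
    using reduced_inv_word[OF w] by auto
  define W where "W = inv_word G ((f, c) # w) @ t @ (f, x \<otimes> c) # w"
  have letters: "snd ` set (inv_word G ((f, c) # w)) \<subseteq> carrier G" "snd ` set t \<subseteq> carrier G"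
    "snd ` set w \<subseteq> carrier G"
    using inv_w t w' reduced_letters_carrier by blast+
  have "reduced W"
    using middle inv_w t t_ne unfolding W_def by (simp add: reduced_append last_inv_word)
  moreover have "odd (length W)"
    using u unfolding W_def ut even_reduced_def by (simp add: inv_word_def)
  moreover have "word_val G W = inv (c \<otimes> word_val G w) \<otimes> (word_val G t \<otimes> (x \<otimes> c \<otimes> word_val G w))"
    using letters inv_w carr unfolding W_def by (simp add: word_val_append image_Un)
  then have "word_val G W = inv (word_val G ((f, c) # w)) \<otimes> word_val G u \<otimes> word_val G ((f, c) # w)"
    using carr letters unfolding ut by (simp add: m_assoc word_val_append image_Un)
  ultimately show ?thesis
    by blast
qed

lemma conjugate_odd:
  assumes u: "even_reduced u" "u \<noteq> []" and w: "reduced ((f, c) # w)"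
    and "hd u \<noteq> (f, c)" "last u \<noteq> (f, inv c)"
  shows "\<exists>W. reduced W \<and> odd (length W)
           \<and> word_val G W = inv (word_val G ((f, c) # w)) \<otimes> word_val G u \<otimes> word_val G ((f, c) # w)"
proof (cases "fst (hd u) = f")
  case True
  then have "hd u = (f, snd (hd u))" "snd (hd u) \<noteq> c"
    using assms(4) by (auto simp: prod_eq_iff)
  then show ?thesis
    using conjugate_odd_left u w by blast
next
  case False
  then have "last u = (f, snd (last u))" "snd (last u) \<noteq> inv c"
    using assms(5) even_reduced_hd_last[OF u] by (auto simp: prod_eq_iff)
  then show ?thesis
    using conjugate_odd_right u w by blast
qed

lemma conjugate_rotate1:
  assumes u: "reduced u" "u \<noteq> []" "hd u = (f, c)" and "y \<in> carrier G" "z \<in> carrier G"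
    and "word_val G u \<otimes> (c \<otimes> y) = c \<otimes> y \<otimes> z"
  shows "word_val G (rotate1 u) \<otimes> y = y \<otimes> z"
proof -
  have "c \<in> carrier G"
    using reduced_letters_carrier[OF u(1)] hd_in_set[OF u(2)] u(3) by force
  then show ?thesis
    using word_val_rotate1[OF u(1,2)] u(3) assms(4-6) reduced_val_closed[OF u(1)]
    by (simp add: m_assoc inv_mult_cancel_left)
qed

lemma conjugate_rotate1_inv:
  assumes u: "reduced u" "u \<noteq> []" "hd u = (f, inv c)" and "c \<in> carrier G" "y \<in> carrier G" "z \<in> carrier G"
    and conj: "word_val G (rotate1 u) \<otimes> (c \<otimes> y) = c \<otimes> y \<otimes> z"
  shows "word_val G u \<otimes> y = y \<otimes> z"
proof -
  have "word_val G u \<otimes> y = inv c \<otimes> (word_val G (rotate1 u) \<otimes> (c \<otimes> y))"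
    using word_val_rotate1[OF u(1,2)] u(3) assms(4,5) reduced_val_closed[OF u(1)]
    by (simp add: m_assoc inv_mult_cancel_left)
  also have "\<dots> = y \<otimes> z"
    using conj assms(4-6) by (simp add: m_assoc inv_mult_cancel_left)
  finally show ?thesis .
qed

text \<open>Induction on the reduced word of the conjugator. Its first letter either cancels against the
  first letter of \<open>u\<close>, or its inverse against the last one; both turn \<open>u\<close> into a rotation of
  itself. Otherwise nothing cancels and the conjugate of \<open>u\<close> has a reduced word of odd length,
  which cannot be \<open>v\<close>.\<close>

lemma conjugate_even_reduced_rotate:
  assumes "even_reduced u" "u \<noteq> []" "even_reduced v" "g \<in> carrier G"
    and "word_val G u \<otimes> g = g \<otimes> word_val G v"
  shows "\<exists>k. v = rotate k u"
proof -
  obtain w where "reduced w" "word_val G w = g"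
    using reduced_exists assms(4) by blast
  with assms show ?thesis
  proof (induction w arbitrary: u g)
    case Nil
    then have "word_val G u = word_val G v"
      using reduced_val_closed by (auto simp: even_reduced_def)
    then have "v = rotate 0 u"
      using Nil.prems(1,3) reduced_unique by (simp add: even_reduced_def)
    then show ?case ..
  next
    case (Cons l w)
    obtain f c where l: "l = (f, c)"
      by fastforce
    have c: "c \<in> carrier G" and w: "reduced w"
      using Cons.prems(6) factor_carrier unfolding l reduced_Cons by auto
    have carr: "word_val G w \<in> carrier G" "word_val G u \<in> carrier G" "word_val G v \<in> carrier G"
      using w Cons.prems(1,3) by (auto intro: reduced_val_closed simp: even_reduced_def)
    have conj: "word_val G u \<otimes> (c \<otimes> word_val G w) = c \<otimes> word_val G w \<otimes> word_val G v"
      using Cons.prems(5,7) unfolding l by simp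
    have IH: "\<exists>k. v = rotate k u'"
      if "even_reduced u'" "u' \<noteq> []" "word_val G u' \<otimes> word_val G w = word_val G w \<otimes> word_val G v" for u'
      using Cons.IH[OF that(1,2) Cons.prems(3) carr(1) that(3) w] by simp
    consider "hd u = (f, c)" | "last u = (f, inv c)" | "hd u \<noteq> (f, c)" "last u \<noteq> (f, inv c)"
      by blast
    then show ?case
    proof cases
      case 1
      then have "word_val G (rotate1 u) \<otimes> word_val G w = word_val G w \<otimes> word_val G v"
        using conjugate_rotate1[OF _ Cons.prems(2) 1 carr(1,3) conj] Cons.prems(1)
        by (simp add: even_reduced_def)
      then obtain k where "v = rotate k (rotate1 u)"
        using IH even_reduced_rotate1 Cons.prems(1,2) by fastforce
      then have "v = rotate (Suc k) u"
        by (simp add: rotate1_rotate_swap)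
      then show ?thesis ..
    next
      case 2
      define u' where "u' = rotate (length u - 1) u"
      have u': "even_reduced u'" "u' \<noteq> []" "hd u' = (f, inv c)" "rotate1 u' = u"
        using Cons.prems(1,2) 2 even_reduced_rotate hd_rotate_length_minus_one[OF Cons.prems(2)]
          rotate1_rotate_length_minus_one[of u]
        unfolding u'_def by simp_all
      then have "word_val G u' \<otimes> word_val G w = word_val G w \<otimes> word_val G v"
        using conjugate_rotate1_inv[OF _ u'(2,3) c carr(1,3)] conj by (simp add: even_reduced_def)
      then obtain k where "v = rotate k u'"
        using IH u' by blast
      then have "v = rotate (k + (length u - 1)) u"
        unfolding u'_def by (simp add: rotate_rotate)
      then show ?thesis ..
    next
      case 3
      then obtain W where W: "reduced W" "odd (length W)" "word_val G W = inv g \<otimes> word_val G u \<otimes> g"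
        using conjugate_odd[OF Cons.prems(1,2)] Cons.prems(6,7) unfolding l by blast
      have "inv g \<otimes> word_val G u \<otimes> g = word_val G v"
        using Cons.prems(4,5) carr by (simp add: m_assoc inv_mult_cancel_left)
      then have "W = v"
        using reduced_unique W Cons.prems(3) by (simp add: even_reduced_def)
      then show ?thesis
        using W Cons.prems(3) by (simp add: even_reduced_def)
    qed
  qed
qed

end

definition alt_prod_word :: "(nat \<Rightarrow> 'a) \<Rightarrow> (nat \<Rightarrow> 'a) \<Rightarrow> nat \<Rightarrow> (bool \<times> 'a) list" where
  "alt_prod_word as xs m = concat (map (\<lambda>i. [(True, as i), (False, xs i)]) [1..<Suc m])"

lemma alt_prod_word_0 [simp]: "alt_prod_word as xs 0 = []"
  by (simp add: alt_prod_word_def)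

lemma alt_prod_word_Suc:
  "alt_prod_word as xs (Suc m) = alt_prod_word as xs m @ [(True, as (Suc m)), (False, xs (Suc m))]"
  by (simp add: alt_prod_word_def)

lemma length_alt_prod_word [simp]: "length (alt_prod_word as xs m) = 2 * m"
  by (induction m) (simp_all add: alt_prod_word_Suc)

lemma alt_prod_word_eq_Nil_iff [simp]: "alt_prod_word as xs m = [] \<longleftrightarrow> m = 0"
  by (simp flip: length_0_conv)

lemma nth_alt_prod_word:
  "j < 2 * m \<Longrightarrow> alt_prod_word as xs m ! j = (even j, if even j then as (j div 2 + 1) else xs (j div 2 + 1))"
proof (induction m)
  case (Suc m)
  then show ?case
    by (cases "j < 2 * m") (auto simp: alt_prod_word_Suc nth_append less_Suc_eq)
qed simp

lemma alt_prod_word_eq_iff: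
  "alt_prod_word as xs m = alt_prod_word bs ys m \<longleftrightarrow> (\<forall>i \<in> {1..m}. as i = bs i \<and> xs i = ys i)"
proof (induction m)
  case (Suc m)
  have "{1..Suc m} = insert (Suc m) {1..m}"
    by auto
  with Suc show ?case
    by (auto simp: alt_prod_word_Suc append_eq_append_conv)
qed simp

lemma (in monoid) word_val_alt_prod_word:
  assumes "\<forall>i \<in> {1..m}. as i \<in> carrier G \<and> xs i \<in> carrier G"
  shows "word_val G (alt_prod_word as xs m) = alt_prod G as xs m"
proof -
  have foldr_eq: "foldr (\<lambda>i r. as i \<otimes> xs i \<otimes> r) l \<one> \<in> carrier G
      \<and> word_val G (concat (map (\<lambda>i. [(True, as i), (False, xs i)]) l)) = foldr (\<lambda>i r. as i \<otimes> xs i \<otimes> r) l \<one>"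
    if "set l \<subseteq> {1..m}" for l
    using that assms by (induction l) (auto simp: m_assoc)
  show ?thesis
    unfolding alt_prod_word_def alt_prod_def by (rule conjunct2[OF foldr_eq]) auto
qed

lemma (in group_hom) hom_alt_prod:
  assumes "\<forall>i \<in> {1..m}. as i \<in> carrier G \<and> xs i \<in> carrier G"
  shows "h (alt_prod G as xs m) = alt_prod H (h \<circ> as) (h \<circ> xs) m"
proof -
  have foldr_hom: "foldr (\<lambda>i r. as i \<otimes> xs i \<otimes> r) l \<one> \<in> carrier G
      \<and> h (foldr (\<lambda>i r. as i \<otimes> xs i \<otimes> r) l \<one>) = foldr (\<lambda>i r. h (as i) \<otimes>\<^bsub>H\<^esub> h (xs i) \<otimes>\<^bsub>H\<^esub> r) l \<one>\<^bsub>H\<^esub>"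
    if "set l \<subseteq> {1..m}" for l
    using that assms by (induction l) auto
  show ?thesis
    unfolding alt_prod_def comp_def by (rule conjunct2[OF foldr_hom]) auto
qed

lemma alt_prod_in_generate:
  assumes "\<forall>i \<in> {1..m}. as i \<in> S \<and> xs i \<in> S"
  shows "alt_prod G as xs m \<in> generate G S"
proof -
  have foldr_in: "foldr (\<lambda>i r. as i \<otimes>\<^bsub>G\<^esub> xs i \<otimes>\<^bsub>G\<^esub> r) l \<one>\<^bsub>G\<^esub> \<in> generate G S" if "set l \<subseteq> {1..m}" for l
    using that
  proof (induction l)
    case (Cons i l)
    then have "as i \<in> generate G S" "xs i \<in> generate G S"
      using assms by (auto intro: generate.incl)
    with Cons show ?case
      by (auto intro: generate.eng)
  qed (simp add: generate.one)
  show ?thesis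
    unfolding alt_prod_def by (rule foldr_in) auto
qed

lemma cyc_funpow: "i \<in> {1..m} \<Longrightarrow> (cyc m ^^ k) i = (i - 1 + k) mod m + 1"
proof (induction k)
  case 0
  then obtain j where "i = Suc j" "j < m"
    by (cases i) auto
  then show ?case
    by simp
next
  case (Suc k)
  then have "(i - 1 + k) mod m + 1 \<in> {1..m}"
    by (simp add: Suc_leI)
  with Suc show ?case
    by (simp add: cyc_def mod_Suc_eq)
qed

lemma cyc_funpow_closed: "i \<in> {1..m} \<Longrightarrow> (cyc m ^^ k) i \<in> {1..m}"
  by (simp add: cyc_funpow Suc_leI)

lemma cyc_funpow_period: "(cyc m ^^ t) ^^ m = id"
proof -
  have "cyc m ^^ m = id"
  proof
    fix i
    show "(cyc m ^^ m) i = id i"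
    proof (cases "i \<in> {1..m}")
      case True
      then obtain j where "i = Suc j" "j < m"
        by (cases i) auto
      with True show ?thesis
        by (simp add: cyc_funpow)
    next
      case False
      have "(cyc m ^^ k) i = i" for k
        using False by (induction k) (auto simp: cyc_def)
      then show ?thesis
        by simp
    qed
  qed
  then show ?thesis
    by (metis funpow_mult id_funpow mult.commute)
qed

lemma rotate_alt_prod_word:
  assumes "0 < m"
  shows "rotate (2 * t) (alt_prod_word as xs m) = alt_prod_word (as \<circ> (cyc m ^^ t)) (xs \<circ> (cyc m ^^ t)) m"
proof (rule nth_equalityI)
  fix j assume "j < length (rotate (2 * t) (alt_prod_word as xs m))"
  then have j: "j < 2 * m"
    by simp
  have "(2 * t + j) mod (2 * m) = 2 * ((t + j div 2) mod m) + j mod 2"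
    using mod_mult2_eq[of "2 * t + j" 2 m] by simp
  then have "even ((2 * t + j) mod (2 * m)) \<longleftrightarrow> even j"
    and "(2 * t + j) mod (2 * m) div 2 = (t + j div 2) mod m"
    by simp_all
  moreover have "(cyc m ^^ t) (j div 2 + 1) = (t + j div 2) mod m + 1"
    using j by (simp add: cyc_funpow add.commute)
  ultimately show "rotate (2 * t) (alt_prod_word as xs m) ! j
      = alt_prod_word (as \<circ> (cyc m ^^ t)) (xs \<circ> (cyc m ^^ t)) m ! j"
    using j assms by (simp add: nth_rotate nth_alt_prod_word)
qed simp

lemma rotate_alt_prod_word_eq:
  assumes "0 < m" and rot: "rotate k (alt_prod_word as xs m) = alt_prod_word bs ys m"
  shows "\<exists>t. \<forall>i \<in> {1..m}. bs i = as ((cyc m ^^ t) i) \<and> ys i = xs ((cyc m ^^ t) i)"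
proof -
  let ?u = "alt_prod_word as xs m"
  have "hd (rotate k ?u) = ?u ! (k mod (2 * m))"
    using assms(1) by (simp add: hd_rotate_conv_nth)
  moreover have "fst (hd (alt_prod_word bs ys m))"
    using assms(1) by (simp add: hd_conv_nth nth_alt_prod_word)
  ultimately have "even (k mod (2 * m))"
    using assms by (simp add: nth_alt_prod_word)
  then obtain t where "k mod (2 * m) = 2 * t"
    by blast
  then have "rotate (2 * t) ?u = alt_prod_word bs ys m"
    using rot rotate_conv_mod[of k ?u] by simp
  then have "alt_prod_word (as \<circ> (cyc m ^^ t)) (xs \<circ> (cyc m ^^ t)) m = alt_prod_word bs ys m"
    by (metis rotate_alt_prod_word[OF assms(1)])
  then show ?thesis
    by (intro exI[of _ t]) (auto simp: alt_prod_word_eq_iff)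
qed

lemma perm_order_funpow:
  assumes "\<sigma> ^^ n = id" "0 < n"
  shows "0 < perm_order \<sigma>" "\<sigma> ^^ perm_order \<sigma> = id"
  using LeastI[of "\<lambda>n. 0 < n \<and> \<sigma> ^^ n = id" n] assms unfolding perm_order_def by auto

lemma funpow_gcd_fixed: "(f ^^ m) x = x \<Longrightarrow> (f ^^ n) x = x \<Longrightarrow> (f ^^ gcd m n) x = x"
proof (induction m n rule: gcd_nat_induct)
  case (step m n)
  have "(f ^^ (m mod n)) x = x"
    using funpow_mod_eq[where f = f and n = n and x = x and m = m] step.prems by simp
  then show ?case
    using step gcd_non_0_nat[of n m] by simp
qed simp

lemma funpow_semiconj:
  assumes "\<And>i. i \<in> I \<Longrightarrow> \<sigma> i \<in> I \<and> f (x i) = x (\<sigma> i)" "i \<in> I"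
  shows "(\<sigma> ^^ n) i \<in> I \<and> (f ^^ n) (x i) = x ((\<sigma> ^^ n) i)"
  by (induction n) (use assms in auto)

lemma prime_dvd_perm_order:
  assumes "Factorial_Ring.prime p" "\<sigma> ^^ n = id" "0 < n"
    and semiconj: "\<And>i. i \<in> I \<Longrightarrow> \<sigma> i \<in> I \<and> f (x i) = x (\<sigma> i)"
    and period: "(f ^^ p) (x i) = x i" and "i \<in> I" and moved: "f (x i) \<noteq> x i"
  shows "p dvd perm_order \<sigma>"
proof (rule ccontr)
  assume "\<not> p dvd perm_order \<sigma>"
  then have "gcd p (perm_order \<sigma>) = 1"
    using assms(1) by (simp add: coprime_iff_gcd_eq_1[symmetric] prime_imp_coprime)
  have "(f ^^ k) (x i) = x ((\<sigma> ^^ k) i)" for k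
    using funpow_semiconj[of I \<sigma> f x i k] semiconj \<open>i \<in> I\<close> by blast
  then have "(f ^^ perm_order \<sigma>) (x i) = x i"
    using perm_order_funpow[OF assms(2,3)] by simp
  then have "(f ^^ gcd p (perm_order \<sigma>)) (x i) = x i"
    by (rule funpow_gcd_fixed[OF period])
  with \<open>gcd p (perm_order \<sigma>) = 1\<close> moved show False
    by simp
qed

context free_product
begin

lemma even_reduced_alt_prod_word:
  assumes "\<forall>i \<in> {1..m}. as i \<in> A - {\<one>} \<and> xs i \<in> B - {\<one>}"
  shows "even_reduced (alt_prod_word as xs m)"
proof -
  have "j div 2 + 1 \<in> {1..m}" if "j < 2 * m" for j
    using that by auto
  then have "reduced (alt_prod_word as xs m)"
    using assms unfolding alt_word_def
    by (auto simp: in_set_conv_nth nth_alt_prod_word)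
  then show ?thesis
    by (simp add: even_reduced_def)
qed

lemma conjugate_alt_prod_cyc:
  assumes "0 < m" "\<forall>i \<in> {1..m}. as i \<in> A - {\<one>} \<and> xs i \<in> B - {\<one>}"
    and "\<forall>i \<in> {1..m}. bs i \<in> A - {\<one>} \<and> ys i \<in> B - {\<one>}"
    and "g \<in> carrier G" "alt_prod G bs ys m = inv g \<otimes> alt_prod G as xs m \<otimes> g"
  shows "\<exists>t. \<forall>i \<in> {1..m}. bs i = as ((cyc m ^^ t) i) \<and> ys i = xs ((cyc m ^^ t) i)"
proof -
  have carr: "\<forall>i \<in> {1..m}. as i \<in> carrier G \<and> xs i \<in> carrier G"
    "\<forall>i \<in> {1..m}. bs i \<in> carrier G \<and> ys i \<in> carrier G"
    using assms(2,3) factor_carrier[of _ True] factor_carrier[of _ False] by auto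
  have "alt_prod G as xs m \<in> carrier G"
    using word_val_alt_prod_word[OF carr(1)] reduced_val_closed even_reduced_alt_prod_word[OF assms(2)]
    by (metis even_reduced_def)
  then have "word_val G (alt_prod_word as xs m) \<otimes> g = g \<otimes> word_val G (alt_prod_word bs ys m)"
    using assms(4,5) carr by (simp add: word_val_alt_prod_word m_assoc mult_inv_cancel_left)
  then obtain k where "alt_prod_word bs ys m = rotate k (alt_prod_word as xs m)"
    using conjugate_even_reduced_rotate even_reduced_alt_prod_word assms by (metis alt_prod_word_eq_Nil_iff neq0_conv)
  then show ?thesis
    using rotate_alt_prod_word_eq[OF assms(1)] by metis
qed

end

theorem lemma4p1:
  fixes G :: "('a, 'b) monoid_scheme"
    and F0 X0 X1 :: "'a set" and h :: "'a \<Rightarrow> 'a" and p m :: nat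
    and a :: 'a and as xs :: "nat \<Rightarrow> 'a"
  defines "H \<equiv> generate G (X0 \<union> X1)"
  assumes free1: "is_free_product G F0 H"
    and free2: "is_free_product (G\<lparr>carrier := H\<rparr>) X0 X1"
    and h_aut: "h \<in> iso G G"
    and h_F0: "\<forall>x \<in> F0. h x = x"
    and h_H: "h ` H = H"
    and p_prime: "Factorial_Ring.prime p"
    and h_ord: "(\<forall>x \<in> H. (h ^^ p) x = x) \<and> (\<forall>n. 0 < n \<and> n < p \<longrightarrow> (\<exists>x \<in> H. (h ^^ n) x \<noteq> x))"
    and h_fix: "{x \<in> H. h x = x} = X0"
    and a_conj: "\<exists>g \<in> carrier G. h a = inv\<^bsub>G\<^esub> g \<otimes>\<^bsub>G\<^esub> a \<otimes>\<^bsub>G\<^esub> g"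
    and a_in: "a \<in> carrier G"
    and a_notin: "a \<notin> generate G (F0 \<union> X0) \<union> H"
    and m_pos: "1 \<le> m"
    and as_in: "\<forall>i \<in> {1..m}. as i \<in> F0 - {\<one>\<^bsub>G\<^esub>}"
    and xs_in: "\<forall>i \<in> {1..m}. xs i \<in> H - {\<one>\<^bsub>G\<^esub>}"
    and a_eq: "a = alt_prod G as xs m"
  shows "\<exists>k. let \<sigma> = cyc m ^^ k in
           (\<forall>i \<in> {1..m}. as i = as (\<sigma> i) \<and> h (xs i) = xs (\<sigma> i)) \<and> p dvd perm_order \<sigma>"
proof -
  interpret free_product G F0 H
    using free1 by (rule free_product.intro)
  interpret h: group_hom G G h
    using h_aut by (simp add: group_hom_def group_hom_axioms_def iso_def is_group)
  have carr: "\<forall>i \<in> {1..m}. as i \<in> carrier G \<and> xs i \<in> carrier G"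
    using as_in xs_in factor_carrier[of _ True] factor_carrier[of _ False] by auto
  have "inj_on h (carrier G)"
    using h_aut by (simp add: iso_def bij_betw_def)
  then have h_letters: "\<forall>i \<in> {1..m}. h (as i) = as i \<and> h (xs i) \<in> H - {\<one>\<^bsub>G\<^esub>}"
    using as_in xs_in carr h_F0 h_H by (auto dest: inj_onD[of h _ _ "\<one>\<^bsub>G\<^esub>"])
  obtain g where "g \<in> carrier G" "h a = inv\<^bsub>G\<^esub> g \<otimes>\<^bsub>G\<^esub> a \<otimes>\<^bsub>G\<^esub> g"
    using a_conj by blast
  moreover have "h a = alt_prod G (h \<circ> as) (h \<circ> xs) m"
    using h.hom_alt_prod[OF carr] a_eq by simp
  ultimately obtain t where \<sigma>: "\<forall>i \<in> {1..m}. h (as i) = as ((cyc m ^^ t) i) \<and> h (xs i) = xs ((cyc m ^^ t) i)"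
    using conjugate_alt_prod_cyc[of m as xs "h \<circ> as" "h \<circ> xs" g] m_pos as_in xs_in h_letters a_eq by auto
  have "\<exists>i \<in> {1..m}. h (xs i) \<noteq> xs i"
    using alt_prod_in_generate[of m as "F0 \<union> X0" xs G] as_in xs_in h_fix a_eq a_notin by auto
  then obtain i where "i \<in> {1..m}" "h (xs i) \<noteq> xs i"
    by blast
  then have "p dvd perm_order (cyc m ^^ t)"
    using \<sigma> h_ord xs_in cyc_funpow_closed m_pos
    by (intro prime_dvd_perm_order[OF p_prime cyc_funpow_period, where I = "{1..m}" and f = h and x = xs]) auto
  then show ?thesis
    using \<sigma> h_letters unfolding Let_def by auto
qed

end
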